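(* Let $G$ be an equilateral compact tree with $p\ge2$ vertices, edge length $\ell$, identically zero potentials, and let $b_1,\dots,b_p\in\mathbb{R}$. Then for each $r=1,2,\dots,p$, the entire function $z\mapsto z^{r-1}\phi(z^2,b_1,\dots,b_p)$ is not of sine type.
   Context: Setting: $G$ is a tree with vertices $v_1,\dots,v_p$ and edges $e_1,\dots,e_{p-1}$ of length $\ell>0$, each oriented arbitrarily and identified with $[0,\ell]$; on each edge $-y_j''=\lambda y_j$. For a vertex $v$ and incident edge $e_j$, $y_j(v)$ is $y_j(\ell)$ if $e_j$ is incoming, $y_j(0)$ if outgoing. Robin–Kirchhoff condition at $v_i$: continuity of $y_j(v_i)$ over incident edges and $\sum_{\text{in}}y_j'(\ell)-\sum_{\text{out}}y_k'(0)+b_iy(v_i)=0$. Characteristic function: with $s(\lambda,x)=\sin(\sqrt\lambda x)/\sqrt\lambda$, $c(\lambda,x)=\cos(\sqrt\lambda x)$ and $y_j=\alpha_js+\beta_jc$ on $e_j$, the vertex conditions form a $2g\times2g$ linear system; fixing for each $v_i$ an incident edge $e_{j(i)}$ and a fixed ordering in which $v_i$ contributes $d(v_i)-1$ continuity rows plus one principal row $\sum_{\text{in}}y_j'(\ell)-\sum_{\text{out}}y_k'(0)+b_iy_{j(i)}(v_i)=0$, $\phi(\lambda,b_1,\dots,b_p)$ is the determinant of its matrix. It is an entire even function of $z=\sqrt\lambda$. Sine type: an entire function $\omega$ of exponential type $\sigma>0$ is of sine type if its zeros lie in a strip $|\operatorname{Im}z|<h$, for some $h_1$ and $M_1,M_2>0$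 one has $M_1\le|\omega(x+ih_1)|\le M_2$ for all real $x$, and its exponential types in the upper and lower half-planes are equal. *)

theory Defs
  imports "HOL-Complex_Analysis.Complex_Analysis" "Jordan_Normal_Form.Determinant"
begin

text \<open>Trees: vertices 0..<p, edges 0..<p-1; edge j is oriented from src j (x = 0) to tgt j (x = l).\<close>

definition tree_adj :: "nat \<Rightarrow> (nat \<Rightarrow> nat) \<Rightarrow> (nat \<Rightarrow> nat) \<Rightarrow> (nat \<times> nat) set" where
  "tree_adj p src tgt = {(src j, tgt j) | j. j < p - 1} \<union> {(tgt j, src j) | j. j < p - 1}"

definition is_tree :: "nat \<Rightarrow> (nat \<Rightarrow> nat) \<Rightarrow> (nat \<Rightarrow> nat) \<Rightarrow> bool" where
  "is_tree p src tgt \<longleftrightarrow> p \<ge> 1 \<and>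
     (\<forall>j < p - 1. src j < p \<and> tgt j < p \<and> src j \<noteq> tgt j) \<and>
     (\<forall>u < p. \<forall>v < p. (u, v) \<in> (tree_adj p src tgt)\<^sup>*)"

definition sfun :: "complex \<Rightarrow> real \<Rightarrow> complex" where
  "sfun lam x = (if lam = 0 then complex_of_real x
                 else sin (csqrt lam * complex_of_real x) / csqrt lam)"

definition cfun :: "complex \<Rightarrow> real \<Rightarrow> complex" where
  "cfun lam x = cos (csqrt lam * complex_of_real x)"

text \<open>Unknowns: column 2k is alpha_k, column 2k+1 is beta_k (y_k = alpha_k s + beta_k c on edge k).
  val_coef: coefficients of y_k(v); der_coef: coefficients of the contribution of edge k to
  the Kirchhoff sum at v (+ y_k'(l) if incoming, - y_k'(0) if outgoing).\<close>

definition val_coef :: "real \<Rightarrow> complex \<Rightarrow> (nat \<Rightarrow> nat) \<Rightarrow> (nat \<Rightarrow> nat) \<Rightarrow> nat \<Rightarrow> nat \<Rightarrow> nat \<Rightarrow> complex" where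
  "val_coef l lam src tgt v k c =
     (if v = tgt k then (if c = 2*k then sfun lam l else if c = 2*k+1 then cfun lam l else 0)
      else if v = src k then (if c = 2*k+1 then 1 else 0)
      else 0)"

definition der_coef :: "real \<Rightarrow> complex \<Rightarrow> (nat \<Rightarrow> nat) \<Rightarrow> (nat \<Rightarrow> nat) \<Rightarrow> nat \<Rightarrow> nat \<Rightarrow> nat \<Rightarrow> complex" where
  "der_coef l lam src tgt v k c =
     (if v = tgt k then (if c = 2*k then cfun lam l else if c = 2*k+1 then - lam * sfun lam l else 0)
      else if v = src k then (if c = 2*k then -1 else 0)
      else 0)"

definition chosen_edge :: "nat \<Rightarrow> (nat \<Rightarrow> nat) \<Rightarrow> (nat \<Rightarrow> nat) \<Rightarrow> nat \<Rightarrow> nat" where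
  "chosen_edge p src tgt v = (LEAST k. k < p - 1 \<and> (src k = v \<or> tgt k = v))"

text \<open>Rows are indexed by the 2(p-1) vertex-edge incidences: row 2k is the incidence of edge k
  at its tail src k, row 2k+1 the incidence at its head tgt k.  For a vertex v, the incidence
  with the chosen edge j(v) gives the principal (Kirchhoff-Robin) row, every other incidence with
  edge k gives the continuity row y_{j(v)}(v) - y_k(v) = 0.\<close>

definition char_matrix ::
  "real \<Rightarrow> nat \<Rightarrow> (nat \<Rightarrow> nat) \<Rightarrow> (nat \<Rightarrow> nat) \<Rightarrow> (nat \<Rightarrow> real) \<Rightarrow> complex \<Rightarrow> complex Matrix.mat" where
  "char_matrix l p src tgt b lam =
     Matrix.mat (2 * (p - 1)) (2 * (p - 1)) (\<lambda>(r, c).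
       let k = r div 2;
           v = (if even r then src k else tgt k);
           j = chosen_edge p src tgt v
       in if k = j
          then (\<Sum>k' < p - 1. der_coef l lam src tgt v k' c)
               + complex_of_real (b v) * val_coef l lam src tgt v j c
          else val_coef l lam src tgt v j c - val_coef l lam src tgt v k c)"

definition char_fun ::
  "real \<Rightarrow> nat \<Rightarrow> (nat \<Rightarrow> nat) \<Rightarrow> (nat \<Rightarrow> nat) \<Rightarrow> (nat \<Rightarrow> real) \<Rightarrow> complex \<Rightarrow> complex" where
  "char_fun l p src tgt b lam = Determinant.det (char_matrix l p src tgt b lam)"

definition exp_type_on :: "complex set \<Rightarrow> (complex \<Rightarrow> complex) \<Rightarrow> ereal" where
  "exp_type_on S f = Inf {ereal tau | tau. \<exists>A. \<forall>z\<in>S. norm (f z) \<le> A * exp (tau * norm z)}"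

definition sine_type :: "(complex \<Rightarrow> complex) \<Rightarrow> bool" where
  "sine_type w \<longleftrightarrow>
     w holomorphic_on UNIV \<and>
     (\<exists>\<sigma>>0. exp_type_on UNIV w = ereal \<sigma>) \<and>
     (\<exists>h. \<forall>z. w z = 0 \<longrightarrow> \<bar>Im z\<bar> < h) \<and>
     (\<exists>h1 M1 M2. M1 > 0 \<and> M2 > 0 \<and>
        (\<forall>x::real. M1 \<le> norm (w (Complex x h1)) \<and> norm (w (Complex x h1)) \<le> M2)) \<and>
     exp_type_on {z. Im z \<ge> 0} w = exp_type_on {z. Im z \<le> 0} w"

end

theory Submission
  imports Defs
begin

text \<open>For z \<noteq> 0 let S = sin (z l) and C = cos (z l). Dividing the p principal rows of the
  characteristic matrix at \<lambda> = z^2 by z and multiplying its p - 1 \<alpha>-columns by z gives a matrix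
  depending only on S, C and 1/z, the Robin coefficients entering multiplied by 1/z; hence
  z^(r-1) \<phi>(z^2) = z^r D(S, C, 1/z) with D the determinant of that matrix.
  On a horizontal line S and C are periodic in Re z, so there are points z_n \<rightarrow> \<infinity> on it at which
  S and C are fixed, and D(S, C, 1/z_n) \<rightarrow> D(S, C, 0). These points can be chosen with
  D(S, C, 0) \<noteq> 0, since \<zeta> \<mapsto> D(sin \<zeta>, cos \<zeta>, 0) is entire and does not vanish at \<zeta> = \<i>:
  multiplying the Kirchhoff conditions of a kernel vector by S and using S^2 + C^2 = 1 gives vertex
  values y with deg v \<cdot> C \<cdot> y v equal to the sum of y over the neighbours of v, and |cos \<i>| > 1
  forces y = 0 at a vertex where |y| is maximal. Thus |z_n^r D(S, C, 1/z_n)| \<rightarrow> \<infinity> as r \<ge> 1, whereas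
  a function of sine type is bounded on some horizontal line.\<close>

section \<open>Rescaling the characteristic matrix\<close>

definition val_coef_trig ::
  "complex \<Rightarrow> complex \<Rightarrow> (nat \<Rightarrow> nat) \<Rightarrow> (nat \<Rightarrow> nat) \<Rightarrow> nat \<Rightarrow> nat \<Rightarrow> nat \<Rightarrow> complex" where
  "val_coef_trig S C src tgt v k c =
     (if v = tgt k then (if c = 2*k then S else if c = 2*k+1 then C else 0)
      else if v = src k then (if c = 2*k+1 then 1 else 0)
      else 0)"

definition der_coef_trig ::
  "complex \<Rightarrow> complex \<Rightarrow> (nat \<Rightarrow> nat) \<Rightarrow> (nat \<Rightarrow> nat) \<Rightarrow> nat \<Rightarrow> nat \<Rightarrow> nat \<Rightarrow> complex" where
  "der_coef_trig S C src tgt v k c =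
     (if v = tgt k then (if c = 2*k then C else if c = 2*k+1 then - S else 0)
      else if v = src k then (if c = 2*k then -1 else 0)
      else 0)"

definition row_vertex :: "(nat \<Rightarrow> nat) \<Rightarrow> (nat \<Rightarrow> nat) \<Rightarrow> nat \<Rightarrow> nat" where
  "row_vertex src tgt r = (if even r then src (r div 2) else tgt (r div 2))"

definition principal_row :: "nat \<Rightarrow> (nat \<Rightarrow> nat) \<Rightarrow> (nat \<Rightarrow> nat) \<Rightarrow> nat \<Rightarrow> bool" where
  "principal_row p src tgt r \<longleftrightarrow> r div 2 = chosen_edge p src tgt (row_vertex src tgt r)"

text \<open>At S = sin (z l), C = cos (z l), e = 1/z this is char_matrix at z^2 with the principal rows
  divided by z and the even (\<alpha>-)columns multiplied by z.\<close>

definition char_matrix_trig :: "nat \<Rightarrow> (nat \<Rightarrow> nat) \<Rightarrow> (nat \<Rightarrow> nat) \<Rightarrow> (nat \<Rightarrow> real) \<Rightarrow>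
    complex \<Rightarrow> complex \<Rightarrow> complex \<Rightarrow> complex Matrix.mat" where
  "char_matrix_trig p src tgt b S C e =
     Matrix.mat (2 * (p - 1)) (2 * (p - 1)) (\<lambda>(r, c).
       let v = row_vertex src tgt r; j = chosen_edge p src tgt v
       in if principal_row p src tgt r
          then (\<Sum>k < p - 1. der_coef_trig S C src tgt v k c)
               + e * complex_of_real (b v) * val_coef_trig S C src tgt v j c
          else val_coef_trig S C src tgt v j c - val_coef_trig S C src tgt v (r div 2) c)"

lemma char_matrix_trig_carrier: "char_matrix_trig p src tgt b S C e \<in> carrier_mat (2*(p-1)) (2*(p-1))"
  unfolding char_matrix_trig_def by simp

lemma csqrt_power2_cases: "csqrt (z^2) = z \<or> csqrt (z^2) = - z"
  using power2_eq_iff power2_csqrt by blast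

lemma sfun_power2: "z \<noteq> 0 \<Longrightarrow> sfun (z^2) l = sin (z * of_real l) / z"
  using csqrt_power2_cases[of z] unfolding sfun_def by (auto simp: sin_minus)

lemma cfun_power2: "cfun (z^2) l = cos (z * of_real l)"
  using csqrt_power2_cases[of z] unfolding cfun_def by (auto simp: cos_minus)

lemma val_coef_power2:
  "z \<noteq> 0 \<Longrightarrow> val_coef l (z^2) src tgt v k c =
     val_coef_trig (sin (z * of_real l)) (cos (z * of_real l)) src tgt v k c * (if even c then 1/z else 1)"
  unfolding val_coef_def val_coef_trig_def sfun_power2 cfun_power2 by auto

lemma der_coef_power2:
  "z \<noteq> 0 \<Longrightarrow> der_coef l (z^2) src tgt v k c =
     z * der_coef_trig (sin (z * of_real l)) (cos (z * of_real l)) src tgt v k c * (if even c then 1/z else 1)"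
  unfolding der_coef_def der_coef_trig_def sfun_power2 cfun_power2 by (auto simp: power2_eq_square)

lemma char_matrix_power2_entry:
  assumes "z \<noteq> 0" "r < 2*(p-1)" "c < 2*(p-1)"
  shows "char_matrix l p src tgt b (z^2) $$ (r,c) =
    (if principal_row p src tgt r then z else 1)
    * char_matrix_trig p src tgt b (sin (z * of_real l)) (cos (z * of_real l)) (1/z) $$ (r,c)
    * (if even c then 1/z else 1)"
  using assms unfolding char_matrix_def char_matrix_trig_def principal_row_def row_vertex_def Let_def
  by (auto simp: val_coef_power2 der_coef_power2 sum_distrib_left sum_distrib_right algebra_simps)

lemma det_rescale:
  fixes A B :: "'a::comm_ring_1 mat"
  assumes A: "A \<in> carrier_mat n n" and B: "B \<in> carrier_mat n n"
    and entries: "\<And>i j. i < n \<Longrightarrow> j < n \<Longrightarrow> A $$ (i,j) = a i * B $$ (i,j) * d j"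
  shows "det A = (\<Prod>i=0..<n. a i) * (\<Prod>j=0..<n. d j) * det B"
proof -
  have "signof q * (\<Prod>i=0..<n. A $$ (i, q i)) =
        (\<Prod>i=0..<n. a i) * (\<Prod>j=0..<n. d j) * (signof q * (\<Prod>i=0..<n. B $$ (i, q i)))"
    if q: "q permutes {0..<n}" for q
  proof -
    have "(\<Prod>i=0..<n. A $$ (i, q i)) = (\<Prod>i=0..<n. a i * B $$ (i, q i) * d (q i))"
      using q by (intro prod.cong) (auto simp: entries permutes_in_image)
    also have "\<dots> = (\<Prod>i=0..<n. a i) * (\<Prod>i=0..<n. B $$ (i, q i)) * (\<Prod>i=0..<n. d (q i))"
      by (simp add: prod.distrib)
    also have "(\<Prod>i=0..<n. d (q i)) = (\<Prod>j=0..<n. d j)"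
      using prod.permute[OF q, of d] by (simp add: comp_def)
    finally show ?thesis by (simp add: algebra_simps)
  qed
  then show ?thesis unfolding det_def'[OF A] det_def'[OF B] sum_distrib_left
    by (intro sum.cong) auto
qed

lemma tree_vertex_incident_edge:
  assumes "is_tree p src tgt" "p \<ge> 2" "v < p"
  shows "\<exists>k<p-1. src k = v \<or> tgt k = v"
proof -
  define u where "u = (if v = 0 then 1 else 0::nat)"
  have u: "u < p" "u \<noteq> v" using assms by (auto simp: u_def)
  then have "(v, u) \<in> (tree_adj p src tgt)\<^sup>*" using assms unfolding is_tree_def by blast
  then obtain y where "(v, y) \<in> tree_adj p src tgt" using u by (metis converse_rtranclE)
  then show ?thesis unfolding tree_adj_def by auto
qed

lemma chosen_edge_incident:
  assumes "is_tree p src tgt" "p \<ge> 2" "v < p"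
  shows "chosen_edge p src tgt v < p-1"
    and "src (chosen_edge p src tgt v) = v \<or> tgt (chosen_edge p src tgt v) = v"
  using LeastI_ex[OF tree_vertex_incident_edge[OF assms]] unfolding chosen_edge_def by auto

lemma tree_edge_ends:
  assumes "is_tree p src tgt" "k < p - 1"
  shows "src k < p" "tgt k < p" "src k \<noteq> tgt k"
  using assms unfolding is_tree_def by auto

definition principal_row_of :: "nat \<Rightarrow> (nat \<Rightarrow> nat) \<Rightarrow> (nat \<Rightarrow> nat) \<Rightarrow> nat \<Rightarrow> nat" where
  "principal_row_of p src tgt v =
     (if src (chosen_edge p src tgt v) = v then 2 * chosen_edge p src tgt v
      else 2 * chosen_edge p src tgt v + 1)"

lemma principal_row_of_spec:
  assumes "is_tree p src tgt" "p \<ge> 2" "v < p"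
  shows "principal_row_of p src tgt v < 2*(p-1)"
    and "row_vertex src tgt (principal_row_of p src tgt v) = v"
    and "principal_row p src tgt (principal_row_of p src tgt v)"
  using chosen_edge_incident[OF assms]
  unfolding principal_row_of_def principal_row_def row_vertex_def by auto

lemma principal_row_of_row_vertex:
  assumes "is_tree p src tgt" "r < 2*(p-1)" "principal_row p src tgt r"
  shows "principal_row_of p src tgt (row_vertex src tgt r) = r"
  using assms(3) tree_edge_ends[OF assms(1), of "r div 2"] assms(2)
  unfolding principal_row_of_def principal_row_def row_vertex_def
  by (cases "even r") (auto elim!: evenE oddE)

lemma row_vertex_less:
  "is_tree p src tgt \<Longrightarrow> r < 2*(p-1) \<Longrightarrow> row_vertex src tgt r < p"
  using tree_edge_ends[of p src tgt "r div 2"] unfolding row_vertex_def by auto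

lemma card_principal_rows:
  assumes "is_tree p src tgt" "p \<ge> 2"
  shows "card {r\<in>{0..<2*(p-1)}. principal_row p src tgt r} = p"
proof -
  have "bij_betw (principal_row_of p src tgt) {0..<p} {r\<in>{0..<2*(p-1)}. principal_row p src tgt r}"
    by (rule bij_betwI[where g = "row_vertex src tgt"])
       (use principal_row_of_spec[OF assms] principal_row_of_row_vertex[OF assms(1)]
          row_vertex_less[OF assms(1)] in auto)
  then show ?thesis by (simp add: bij_betw_same_card[symmetric])
qed

lemma prod_principal_rows:
  assumes "is_tree p src tgt" "p \<ge> 2"
  shows "(\<Prod>r=0..<2*(p-1). if principal_row p src tgt r then z else 1) = z ^ p"
proof -
  have "{0..<2*(p-1)} \<inter> Collect (principal_row p src tgt) = {r\<in>{0..<2*(p-1)}. principal_row p src tgt r}"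
    by auto
  then show ?thesis using card_principal_rows[OF assms] by (simp add: prod.If_cases)
qed

lemma prod_even_indices: "(\<Prod>c=0..<2*m. if even c then w else 1) = w ^ m"
proof (induction m)
  case (Suc m)
  have "{0..<2 * Suc m} = insert (2*m+1) (insert (2*m) {0..<2*m})" by auto
  then show ?case using Suc by simp
qed simp

lemma char_fun_power2:
  assumes "is_tree p src tgt" "p \<ge> 2" "z \<noteq> 0"
  shows "char_fun l p src tgt b (z^2) =
    z * det (char_matrix_trig p src tgt b (sin (z * of_real l)) (cos (z * of_real l)) (1/z))"
proof -
  have "char_fun l p src tgt b (z^2) =
      (\<Prod>r=0..<2*(p-1). if principal_row p src tgt r then z else 1) *
      (\<Prod>c=0..<2*(p-1). if even c then 1/z else 1) *
      det (char_matrix_trig p src tgt b (sin (z * of_real l)) (cos (z * of_real l)) (1/z))"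
    unfolding char_fun_def
    by (rule det_rescale[OF _ char_matrix_trig_carrier char_matrix_power2_entry[OF assms(3)]])
       (simp add: char_matrix_def)
  also have "\<dots> = z ^ p * (1/z) ^ (p-1) *
      det (char_matrix_trig p src tgt b (sin (z * of_real l)) (cos (z * of_real l)) (1/z))"
    unfolding prod_principal_rows[OF assms(1,2)] prod_even_indices ..
  also have "z ^ p * (1/z) ^ (p-1) = z"
    using assms(2,3) by (simp add: power_one_over power_diff)
  finally show ?thesis .
qed

section \<open>Holomorphy of the determinant\<close>

lemma holomorphic_on_if_const [holomorphic_intros]:
  "f holomorphic_on S \<Longrightarrow> g holomorphic_on S \<Longrightarrow> (\<lambda>z. if P then f z else g z) holomorphic_on S"
  by (cases P) auto

lemma holomorphic_on_det:
  assumes "\<And>x. F x \<in> carrier_mat n n"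
    and "\<And>i j. i < n \<Longrightarrow> j < n \<Longrightarrow> (\<lambda>x. F x $$ (i,j)) holomorphic_on S"
  shows "(\<lambda>x. det (F x)) holomorphic_on S"
proof -
  have "(\<lambda>x. det (F x)) =
      (\<lambda>x. \<Sum>q \<in> {q. q permutes {0..<n}}. signof q * (\<Prod>i = 0..<n. F x $$ (i, q i)))"
    using det_def'[OF assms(1)] by auto
  then show ?thesis
    by (auto simp: permutes_in_image intro!: holomorphic_intros assms(2))
qed

lemma holomorphic_on_det_char_matrix_trig:
  assumes "f holomorphic_on S" "g holomorphic_on S" "h holomorphic_on S"
  shows "(\<lambda>x. det (char_matrix_trig p src tgt b (f x) (g x) (h x))) holomorphic_on S"
  by (rule holomorphic_on_det[OF char_matrix_trig_carrier])
     (auto simp: char_matrix_trig_def val_coef_trig_def der_coef_trig_def Let_def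
           intro!: holomorphic_intros assms)

section \<open>Nonsingularity by the maximum principle\<close>

definition edge_value ::
  "nat \<Rightarrow> complex \<Rightarrow> complex \<Rightarrow> (nat \<Rightarrow> nat) \<Rightarrow> (nat \<Rightarrow> nat) \<Rightarrow> complex vec \<Rightarrow> nat \<Rightarrow> nat \<Rightarrow> complex" where
  "edge_value p S C src tgt x v k = (\<Sum>c=0..<2*(p-1). val_coef_trig S C src tgt v k c * x $ c)"

definition edge_flux ::
  "nat \<Rightarrow> complex \<Rightarrow> complex \<Rightarrow> (nat \<Rightarrow> nat) \<Rightarrow> (nat \<Rightarrow> nat) \<Rightarrow> complex vec \<Rightarrow> nat \<Rightarrow> nat \<Rightarrow> complex" where
  "edge_flux p S C src tgt x v k = (\<Sum>c=0..<2*(p-1). der_coef_trig S C src tgt v k c * x $ c)"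

lemma edge_value_eq:
  assumes "k < p - 1"
  shows "edge_value p S C src tgt x v k =
    (if v = tgt k then S * x $ (2*k) + C * x $ (2*k+1) else if v = src k then x $ (2*k+1) else 0)"
  using assms unfolding edge_value_def val_coef_trig_def
  by (cases "v = tgt k"; cases "v = src k") (simp_all add: if_distrib[where f="\<lambda>t. t * _"] sum.If_cases)

lemma edge_flux_eq:
  assumes "k < p - 1"
  shows "edge_flux p S C src tgt x v k =
    (if v = tgt k then C * x $ (2*k) - S * x $ (2*k+1) else if v = src k then - x $ (2*k) else 0)"
  using assms unfolding edge_flux_def der_coef_trig_def
  by (cases "v = tgt k"; cases "v = src k") (simp_all add: if_distrib[where f="\<lambda>t. t * _"] sum.If_cases)

lemma char_matrix_trig_mult_vec_index:
  assumes "r < 2*(p-1)" "x \<in> carrier_vec (2*(p-1))"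
  shows "(char_matrix_trig p src tgt b S C e *\<^sub>v x) $ r =
    (let v = row_vertex src tgt r; j = chosen_edge p src tgt v in
     if principal_row p src tgt r
     then (\<Sum>k<p-1. edge_flux p S C src tgt x v k) + e * b v * edge_value p S C src tgt x v j
     else edge_value p S C src tgt x v j - edge_value p S C src tgt x v (r div 2))"
proof -
  define v where "v = row_vertex src tgt r"
  define j where "j = chosen_edge p src tgt v"
  let ?M = "char_matrix_trig p src tgt b S C e"
  have row: "(?M *\<^sub>v x) $ r = (\<Sum>c=0..<2*(p-1). ?M $$ (r,c) * x $ c)"
    using assms by (simp add: char_matrix_trig_def scalar_prod_def)
  show ?thesis
  proof (cases "principal_row p src tgt r")
    case True
    have "(\<Sum>c=0..<2*(p-1). ?M $$ (r,c) * x $ c) = (\<Sum>c=0..<2*(p-1).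
        (\<Sum>k<p-1. der_coef_trig S C src tgt v k c * x $ c) + e * b v * (val_coef_trig S C src tgt v j c * x $ c))"
      using assms True
      by (intro sum.cong)
         (auto simp: char_matrix_trig_def Let_def v_def j_def sum_distrib_left sum_distrib_right algebra_simps)
    also have "\<dots> = (\<Sum>k<p-1. edge_flux p S C src tgt x v k) + e * b v * edge_value p S C src tgt x v j"
      unfolding edge_flux_def edge_value_def sum.distrib sum_distrib_left
      by (simp add: sum.swap[of _ "{0..<_}"])
    finally show ?thesis using row True by (simp add: v_def j_def Let_def)
  next
    case False
    have "(\<Sum>c=0..<2*(p-1). ?M $$ (r,c) * x $ c) = (\<Sum>c=0..<2*(p-1).
        val_coef_trig S C src tgt v j c * x $ c - val_coef_trig S C src tgt v (r div 2) c * x $ c)"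
      using assms False
      by (intro sum.cong) (auto simp: char_matrix_trig_def Let_def v_def j_def algebra_simps)
    also have "\<dots> = edge_value p S C src tgt x v j - edge_value p S C src tgt x v (r div 2)"
      unfolding edge_value_def by (simp add: sum_subtractf)
    finally show ?thesis using row False by (simp add: v_def j_def Let_def)
  qed
qed

lemma kernel_edge_value_at_row_vertex:
  assumes ker: "char_matrix_trig p src tgt b S C e *\<^sub>v x = 0\<^sub>v (2*(p-1))"
    and x: "x \<in> carrier_vec (2*(p-1))" and r: "r < 2*(p-1)"
  shows "edge_value p S C src tgt x (row_vertex src tgt r) (r div 2) =
    edge_value p S C src tgt x (row_vertex src tgt r) (chosen_edge p src tgt (row_vertex src tgt r))"
proof (cases "principal_row p src tgt r")
  case True
  then show ?thesis by (simp add: principal_row_def)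
next
  case False
  have "(char_matrix_trig p src tgt b S C e *\<^sub>v x) $ r = 0" using ker r by simp
  then show ?thesis using char_matrix_trig_mult_vec_index[OF r x] False by (simp add: Let_def)
qed

lemma kernel_flux_sum_zero:
  assumes ker: "char_matrix_trig p src tgt b S C 0 *\<^sub>v x = 0\<^sub>v (2*(p-1))"
    and x: "x \<in> carrier_vec (2*(p-1))" and T: "is_tree p src tgt" "p \<ge> 2" and v: "v < p"
  shows "(\<Sum>k<p-1. edge_flux p S C src tgt x v k) = 0"
proof -
  note rv = principal_row_of_spec[OF T v]
  have "(char_matrix_trig p src tgt b S C 0 *\<^sub>v x) $ principal_row_of p src tgt v = 0"
    using ker rv(1) by simp
  then show ?thesis using char_matrix_trig_mult_vec_index[OF rv(1) x] rv(2,3) by (simp add: Let_def)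
qed

lemma scaled_edge_flux:
  fixes x :: "complex vec"
  assumes "k < p - 1" "S^2 + C^2 = 1"
    and "x $ (2*k+1) = ys" "S * x $ (2*k) + C * x $ (2*k+1) = yt"
  shows "S * edge_flux p S C src tgt x v k =
    (if v = tgt k then C * yt - ys else if v = src k then C * ys - yt else 0)"
proof -
  have "S * (C * x $ (2*k) - S * x $ (2*k+1)) =
      C * (S * x $ (2*k) + C * x $ (2*k+1)) - (S^2 + C^2) * x $ (2*k+1)"
    by (simp add: algebra_simps power2_eq_square)
  then have at_tgt: "S * (C * x $ (2*k) - S * x $ (2*k+1)) = C * yt - ys"
    using assms(2-4) by simp
  have at_src: "S * (- x $ (2*k)) = C * ys - yt"
    using assms(3,4) by (simp add: algebra_simps)
  show ?thesis using edge_flux_eq[OF assms(1)] at_tgt at_src by auto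
qed

lemma zero_by_maximum_principle:
  fixes y :: "'v \<Rightarrow> 'a::real_normed_field"
  assumes "finite V" "norm c > 1"
    and nonempty: "\<And>v. v \<in> V \<Longrightarrow> finite (N v) \<and> N v \<noteq> {}"
    and closed: "\<And>v k. v \<in> V \<Longrightarrow> k \<in> N v \<Longrightarrow> nb v k \<in> V"
    and mean: "\<And>v. v \<in> V \<Longrightarrow> of_nat (card (N v)) * c * y v = (\<Sum>k\<in>N v. y (nb v k))"
    and "v \<in> V"
  shows "y v = 0"
proof -
  let ?m = "Max ((\<lambda>w. norm (y w)) ` V)"
  have "?m \<in> (\<lambda>w. norm (y w)) ` V"
    using assms(1) \<open>v \<in> V\<close> by (intro Max_in) auto
  then obtain u where u: "u \<in> V" "norm (y u) = ?m" by auto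
  have max: "norm (y w) \<le> norm (y u)" if "w \<in> V" for w
    using Max_ge[of "(\<lambda>w. norm (y w)) ` V" "norm (y w)"] u(2) assms(1) that by auto
  have "real (card (N u)) * norm c * norm (y u) = norm (of_nat (card (N u)) * c * y u)"
    by (simp only: norm_mult norm_of_nat)
  also have "\<dots> = norm (\<Sum>k\<in>N u. y (nb u k))"
    by (simp only: mean[OF u(1)])
  also have "\<dots> \<le> (\<Sum>k\<in>N u. norm (y (nb u k)))" by (rule norm_sum)
  also have "\<dots> \<le> real (card (N u)) * norm (y u)"
    using sum_bounded_above[of "N u" "\<lambda>k. norm (y (nb u k))" "norm (y u)"] u(1) max closed by auto
  finally have le: "real (card (N u)) * (norm c * norm (y u)) \<le> real (card (N u)) * norm (y u)"
    by (simp only: mult.assoc)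
  have "card (N u) > 0" using nonempty[OF u(1)] by (simp add: card_gt_0_iff)
  then have "norm c * norm (y u) \<le> norm (y u)"
    using le by (simp only: mult_le_cancel_left_pos of_nat_0_less_iff)
  then have "(norm c - 1) * norm (y u) \<le> 0" by (simp add: algebra_simps)
  then have "norm (y u) = 0" using \<open>norm c > 1\<close> by (simp add: mult_le_0_iff)
  then show ?thesis using max[OF \<open>v \<in> V\<close>] by simp
qed

definition vertex_value ::
  "nat \<Rightarrow> complex \<Rightarrow> complex \<Rightarrow> (nat \<Rightarrow> nat) \<Rightarrow> (nat \<Rightarrow> nat) \<Rightarrow> complex vec \<Rightarrow> nat \<Rightarrow> complex" where
  "vertex_value p S C src tgt x v = edge_value p S C src tgt x v (chosen_edge p src tgt v)"

definition incident_edges :: "nat \<Rightarrow> (nat \<Rightarrow> nat) \<Rightarrow> (nat \<Rightarrow> nat) \<Rightarrow> nat \<Rightarrow> nat set" where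
  "incident_edges p src tgt v = {k\<in>{..<p-1}. src k = v \<or> tgt k = v}"

definition other_end :: "(nat \<Rightarrow> nat) \<Rightarrow> (nat \<Rightarrow> nat) \<Rightarrow> nat \<Rightarrow> nat \<Rightarrow> nat" where
  "other_end src tgt v k = (if tgt k = v then src k else tgt k)"

lemma kernel_edge_ends:
  assumes ker: "char_matrix_trig p src tgt b S C e *\<^sub>v x = 0\<^sub>v (2*(p-1))"
    and x: "x \<in> carrier_vec (2*(p-1))" and T: "is_tree p src tgt" and k: "k < p - 1"
  shows "x $ (2*k+1) = vertex_value p S C src tgt x (src k)"
    and "S * x $ (2*k) + C * x $ (2*k+1) = vertex_value p S C src tgt x (tgt k)"
proof -
  have "edge_value p S C src tgt x (src k) k = vertex_value p S C src tgt x (src k)"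
    using kernel_edge_value_at_row_vertex[OF ker x, of "2*k"] k
    by (simp add: row_vertex_def vertex_value_def)
  moreover have "edge_value p S C src tgt x (tgt k) k = vertex_value p S C src tgt x (tgt k)"
    using kernel_edge_value_at_row_vertex[OF ker x, of "2*k+1"] k
    by (simp add: row_vertex_def vertex_value_def)
  ultimately show "x $ (2*k+1) = vertex_value p S C src tgt x (src k)"
    and "S * x $ (2*k) + C * x $ (2*k+1) = vertex_value p S C src tgt x (tgt k)"
    using edge_value_eq[OF k] tree_edge_ends[OF T k] by auto
qed

lemma kernel_mean_value:
  assumes ker: "char_matrix_trig p src tgt b S C 0 *\<^sub>v x = 0\<^sub>v (2*(p-1))"
    and x: "x \<in> carrier_vec (2*(p-1))" and T: "is_tree p src tgt" "p \<ge> 2"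
    and SC: "S^2 + C^2 = 1" and v: "v < p"
  shows "of_nat (card (incident_edges p src tgt v)) * C * vertex_value p S C src tgt x v =
    (\<Sum>k\<in>incident_edges p src tgt v. vertex_value p S C src tgt x (other_end src tgt v k))"
proof -
  let ?y = "vertex_value p S C src tgt x"
  have "0 = S * (\<Sum>k<p-1. edge_flux p S C src tgt x v k)"
    using kernel_flux_sum_zero[OF ker x T v] by simp
  also have "\<dots> = (\<Sum>k<p-1. if src k = v \<or> tgt k = v then C * ?y v - ?y (other_end src tgt v k) else 0)"
    unfolding sum_distrib_left
    using scaled_edge_flux[OF _ SC kernel_edge_ends[OF ker x T(1)]] tree_edge_ends[OF T(1)]
    by (intro sum.cong) (auto simp: other_end_def)
  also have "\<dots> = (\<Sum>k\<in>incident_edges p src tgt v. C * ?y v - ?y (other_end src tgt v k))"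
    by (simp only: incident_edges_def sum.inter_filter[OF finite_lessThan])
  also have "\<dots> = of_nat (card (incident_edges p src tgt v)) * C * ?y v -
      (\<Sum>k\<in>incident_edges p src tgt v. ?y (other_end src tgt v k))"
    by (simp add: sum_subtractf)
  finally show ?thesis by simp
qed

lemma char_matrix_trig_nonsingular:
  assumes T: "is_tree p src tgt" "p \<ge> 2" and "S \<noteq> 0" "S^2 + C^2 = 1" "norm C > 1"
  shows "det (char_matrix_trig p src tgt b S C 0) \<noteq> 0"
proof
  let ?n = "2*(p-1)"
  assume "det (char_matrix_trig p src tgt b S C 0) = 0"
  then obtain x where x: "x \<in> carrier_vec ?n" "x \<noteq> 0\<^sub>v ?n"
    and ker: "char_matrix_trig p src tgt b S C 0 *\<^sub>v x = 0\<^sub>v ?n"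
    using det_0_iff_vec_prod_zero[OF char_matrix_trig_carrier] by blast
  have y0: "vertex_value p S C src tgt x v = 0" if "v < p" for v
  proof (rule zero_by_maximum_principle[of "{..<p}" C "incident_edges p src tgt" "other_end src tgt"])
    show "finite (incident_edges p src tgt v) \<and> incident_edges p src tgt v \<noteq> {}" if "v \<in> {..<p}" for v
      using tree_vertex_incident_edge[OF T, of v] that by (auto simp: incident_edges_def)
    show "other_end src tgt v k \<in> {..<p}" if "k \<in> incident_edges p src tgt v" for v k
      using tree_edge_ends[OF T(1)] that by (auto simp: incident_edges_def other_end_def)
  qed (use assms(4,5) kernel_mean_value[OF ker x(1) T] that in auto)
  have "x = 0\<^sub>v ?n"
  proof (rule eq_vecI)
    fix c assume "c < dim_vec (0\<^sub>v ?n :: complex vec)"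
    then have k: "c div 2 < p - 1" by auto
    have "x $ (2*(c div 2)+1) = 0" "S * x $ (2*(c div 2)) = 0"
      using kernel_edge_ends[OF ker x(1) T(1) k] y0 tree_edge_ends[OF T(1) k] by auto
    then show "x $ c = 0\<^sub>v ?n $ c" using \<open>S \<noteq> 0\<close> \<open>c < dim_vec _\<close>
      by (cases "even c") (auto elim!: evenE oddE)
  qed (use x(1) in simp)
  with x(2) show False ..
qed

section \<open>Growth along horizontal lines\<close>

lemma sin_i_nonzero: "sin \<i> \<noteq> 0"
proof
  assume "sin \<i> = 0"
  then obtain n :: int where "\<i> = complex_of_real (of_int n * pi)" using sin_eq_0 by blast
  then have "Im \<i> = Im (complex_of_real (of_int n * pi))" by simp
  then show False by simp
qed

lemma norm_cos_i_gt_1: "norm (cos \<i>) > 1"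
proof -
  define x :: real where "x = (exp 1 + inverse (exp 1)) / 2"
  have "cos \<i> = complex_of_real x"
    using cosh_real[of 1] unfolding x_def by simp
  moreover have "(2::real) + 0 < exp 1 + inverse (exp 1)"
    using exp_ge_add_one_self_aux[of "1::real"] by (intro add_le_less_mono) simp_all
  then have "x > 1" unfolding x_def by simp
  ultimately show ?thesis by simp
qed

lemma entire_nonzero_on_horizontal_line:
  assumes f: "f holomorphic_on UNIV" and "f z0 \<noteq> 0"
  shows "\<exists>t. f (Complex t h) \<noteq> 0"
proof (rule ccontr)
  assume "\<not> (\<exists>t. f (Complex t h) \<noteq> 0)"
  then have zero: "f z = 0" if "z \<in> {z. Im z = h}" for z
    using that by (metis complex_surj mem_Collect_eq complex.sel(2))
  have "Complex 0 h islimpt {z. Im z = h}"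
    unfolding islimpt_approachable
  proof (intro allI impI)
    fix e :: real assume "e > 0"
    then show "\<exists>z\<in>{z. Im z = h}. z \<noteq> Complex 0 h \<and> dist z (Complex 0 h) < e"
      by (intro bexI[of _ "Complex (e/2) h"]) (auto simp: dist_norm complex_diff complex_norm)
  qed
  then have "f z0 = 0"
    using analytic_continuation[OF f open_UNIV connected_UNIV _ _ _ zero] by auto
  with \<open>f z0 \<noteq> 0\<close> show False ..
qed

lemma det_char_matrix_trig_nonzero_on_line:
  assumes "is_tree p src tgt" "p \<ge> 2"
  shows "\<exists>t. det (char_matrix_trig p src tgt b (sin (Complex t h)) (cos (Complex t h)) 0) \<noteq> 0"
proof (rule entire_nonzero_on_horizontal_line)
  show "(\<lambda>\<zeta>. det (char_matrix_trig p src tgt b (sin \<zeta>) (cos \<zeta>) 0)) holomorphic_on UNIV"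
    using holomorphic_on_det_char_matrix_trig[of sin UNIV cos "\<lambda>_. 0"] by (simp add: holomorphic_intros)
  show "det (char_matrix_trig p src tgt b (sin \<i>) (cos \<i>) 0) \<noteq> 0"
    by (rule char_matrix_trig_nonsingular[OF assms sin_i_nonzero sin_cos_squared_add norm_cos_i_gt_1])
qed

lemma norm_power_mult_inverse_at_top:
  fixes z :: "'a \<Rightarrow> complex"
  assumes z: "filterlim z at_infinity F" and D: "isCont D 0" "D 0 \<noteq> 0" and "r > 0"
  shows "filterlim (\<lambda>n. norm (z n ^ r * D (1 / z n))) at_top F"
proof -
  have "((\<lambda>n. 1 / z n) \<longlongrightarrow> 0) F"
    using filterlim_compose[OF tendsto_inverse_0 z] by (simp add: inverse_eq_divide o_def)
  then have "((\<lambda>n. norm (D (1 / z n))) \<longlongrightarrow> norm (D 0)) F"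
    by (intro tendsto_norm isCont_tendsto_compose[OF D(1)])
  moreover have "filterlim (\<lambda>n. norm (z n) ^ r) at_top F"
    using filterlim_pow_at_top[OF \<open>r > 0\<close>] z by (simp add: filterlim_at_infinity_conv_norm_at_top)
  ultimately show ?thesis
    using D(2) by (simp add: norm_mult norm_power filterlim_at_top_mult_tendsto_pos)
qed

lemma isCont_det_char_matrix_trig: "isCont (\<lambda>e. det (char_matrix_trig p src tgt b S C e)) 0"
proof -
  have "(\<lambda>e. det (char_matrix_trig p src tgt b S C e)) holomorphic_on UNIV"
    using holomorphic_on_det_char_matrix_trig[of "\<lambda>_. S" UNIV "\<lambda>_. C" "\<lambda>e. e"]
    by (simp add: holomorphic_intros)
  then have "continuous_on UNIV (\<lambda>e. det (char_matrix_trig p src tgt b S C e))"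
    by (rule holomorphic_on_imp_continuous_on)
  then show ?thesis by (simp add: continuous_on_eq_continuous_at)
qed

lemma periodic_points_on_horizontal_line:
  assumes "l > 0"
  obtains z :: "nat \<Rightarrow> complex"
  where "\<And>n. Im (z n) = Im \<zeta> / l"
    and "\<And>n. sin (z n * of_real l) = sin \<zeta>" "\<And>n. cos (z n * of_real l) = cos \<zeta>"
    and "filterlim z at_infinity sequentially"
proof
  define z where "z n = (\<zeta> + of_real (2 * pi * real n)) / of_real l" for n
  show "Im (z n) = Im \<zeta> / l" for n by (simp add: z_def Im_divide_of_real)
  have "sin (2 * pi * real n) = 0" "cos (2 * pi * real n) = 1" for n
    using sin_int_2pin[of "int n"] cos_int_2pin[of "int n"] by simp_all
  then have "sin (complex_of_real (2 * pi * real n)) = 0" "cos (complex_of_real (2 * pi * real n)) = 1" for n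
    by (simp_all only: sin_of_real cos_of_real of_real_0 of_real_1)
  moreover have "z n * of_real l = \<zeta> + of_real (2 * pi * real n)" for n
    using assms by (simp add: z_def)
  ultimately show "sin (z n * of_real l) = sin \<zeta>" "cos (z n * of_real l) = cos \<zeta>" for n
    by (simp_all add: sin_add cos_add)
  have "(\<lambda>n. Re (z n)) = (\<lambda>n. Re \<zeta> / l + (2 * pi / l) * real n)"
    using assms by (auto simp: z_def field_simps Re_divide_of_real)
  moreover have "filterlim (\<lambda>n. Re \<zeta> / l + (2 * pi / l) * real n) at_top sequentially"
    by (rule filterlim_tendsto_add_at_top[OF tendsto_const
          filterlim_tendsto_pos_mult_at_top[OF tendsto_const _ filterlim_real_sequentially]])
       (use assms in simp)
  ultimately have "filterlim (\<lambda>n. Re (z n)) at_top sequentially" by simp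
  then show "filterlim z at_infinity sequentially"
    unfolding filterlim_at_infinity_conv_norm_at_top
    by (rule filterlim_at_top_mono) (simp add: complex_Re_le_cmod)
qed

lemma char_fun_unbounded_on_horizontal_line:
  assumes T: "is_tree p src tgt" "p \<ge> 2" and "l > 0" "r \<ge> 1"
  shows "\<exists>x. M < norm (Complex x h ^ (r - 1) * char_fun l p src tgt b (Complex x h ^ 2))"
proof -
  let ?w = "\<lambda>z. z ^ (r - 1) * char_fun l p src tgt b (z ^ 2)"
  define D where "D S C e = det (char_matrix_trig p src tgt b S C e)" for S C e
  have w: "?w z = z ^ r * D (sin (z * of_real l)) (cos (z * of_real l)) (1 / z)" if "z \<noteq> 0" for z
    using char_fun_power2[OF T that] \<open>r \<ge> 1\<close> that by (simp add: D_def power_eq_if)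
  obtain t where t: "D (sin (Complex t (h * l))) (cos (Complex t (h * l))) 0 \<noteq> 0"
    using det_char_matrix_trig_nonzero_on_line[OF T] unfolding D_def by blast
  obtain z where z: "\<And>n. Im (z n) = h"
    "\<And>n. sin (z n * of_real l) = sin (Complex t (h * l))"
    "\<And>n. cos (z n * of_real l) = cos (Complex t (h * l))"
    and z_inf: "filterlim z at_infinity sequentially"
    using periodic_points_on_horizontal_line[OF \<open>l > 0\<close>, of "Complex t (h * l)"] \<open>l > 0\<close> by auto
  have "filterlim (\<lambda>n. norm (z n ^ r * D (sin (Complex t (h * l))) (cos (Complex t (h * l))) (1 / z n)))
      at_top sequentially"
    using norm_power_mult_inverse_at_top[OF z_inf isCont_det_char_matrix_trig] t \<open>r \<ge> 1\<close>
    by (simp add: D_def)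
  then have "eventually (\<lambda>n. M <
      norm (z n ^ r * D (sin (Complex t (h * l))) (cos (Complex t (h * l))) (1 / z n))) sequentially"
    by (simp add: filterlim_at_top_dense)
  moreover have "eventually (\<lambda>n. z n \<noteq> 0) sequentially"
    using z_inf by (rule filterlim_at_infinity_imp_eventually_ne)
  ultimately have "eventually (\<lambda>n. M < norm (?w (z n))) sequentially"
    by eventually_elim (simp only: w z not_False_eq_True)
  then obtain n where "M < norm (?w (z n))" by (auto simp: eventually_sequentially)
  moreover have "z n = Complex (Re (z n)) h" using z(1) by (simp add: complex_eq_iff)
  ultimately show ?thesis by metis
qed

theorem lemma4p5:
  fixes p :: nat and l :: real and src tgt :: "nat \<Rightarrow> nat" and b :: "nat \<Rightarrow> real" and r :: nat
  assumes "p \<ge> 2"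
    and "is_tree p src tgt"
    and "l > 0"
    and "1 \<le> r" and "r \<le> p"
  shows "\<not> sine_type (\<lambda>z. z ^ (r - 1) * char_fun l p src tgt b (z ^ 2))"
proof
  assume "sine_type (\<lambda>z. z ^ (r - 1) * char_fun l p src tgt b (z ^ 2))"
  then obtain h M where "\<And>x. norm (Complex x h ^ (r - 1) * char_fun l p src tgt b (Complex x h ^ 2)) \<le> M"
    unfolding sine_type_def by blast
  with char_fun_unbounded_on_horizontal_line[OF assms(2,1,3,4), of M h b] show False
    by (meson not_le)
qed

end
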